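(* Let $A$ be a ring and $b,s,t\in A$. (a) If $t\in\bigcap_{i\ge0}(bA+s^iA)$, then $W(b,s,t)=\bigcap_{i\ge0}(bA+s^iA)$. (b) If $bA+sA+tA=A$, or if $b,s,t$ is an $A$-regular sequence, then $W(b,s,t)=\bigcap_{i\ge0}(bA+sA)^i$.
   Context: For elements $b,s,t$ of a ring $A$, define ideals $W_i,J_i$ ($i\ge0$) by $W_0=A$, $J_0=(W_0:t)=A$, and for $i\ge1$: $W_i=bJ_{i-1}+s^iA$ and $J_i=(W_i:t)$, where $(W:t)=\{x\in A: tx\in W\}$. Set $W(b,s,t)=\bigcap_{i\ge0}W_i$. *)

theory Defs
  imports Main
begin

definition colon :: "'a::comm_ring_1 set \<Rightarrow> 'a \<Rightarrow> 'a set" where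
  "colon W t = {x. t * x \<in> W}"

fun Wseq :: "'a::comm_ring_1 \<Rightarrow> 'a \<Rightarrow> 'a \<Rightarrow> nat \<Rightarrow> 'a set" where
  "Wseq b s t 0 = UNIV"
| "Wseq b s t (Suc i) =
     {b * x + s ^ (Suc i) * y | x y. x \<in> colon (Wseq b s t i) t}"

definition Wbst :: "'a::comm_ring_1 \<Rightarrow> 'a \<Rightarrow> 'a \<Rightarrow> 'a set" where
  "Wbst b s t = (\<Inter>i. Wseq b s t i)"

inductive_set ideal_gen :: "'a::comm_ring_1 set \<Rightarrow> 'a set" for S where
  zero: "0 \<in> ideal_gen S"
| add: "x \<in> ideal_gen S \<Longrightarrow> y \<in> ideal_gen S \<Longrightarrow> x + y \<in> ideal_gen S"
| mult: "x \<in> S \<Longrightarrow> r * x \<in> ideal_gen S"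

definition ideal_prod :: "'a::comm_ring_1 set \<Rightarrow> 'a set \<Rightarrow> 'a set" where
  "ideal_prod I J = ideal_gen {x * y | x y. x \<in> I \<and> y \<in> J}"

fun ideal_pow :: "'a::comm_ring_1 set \<Rightarrow> nat \<Rightarrow> 'a set" where
  "ideal_pow I 0 = UNIV"
| "ideal_pow I (Suc n) = ideal_prod (ideal_pow I n) I"

definition ideal2 :: "'a::comm_ring_1 \<Rightarrow> 'a \<Rightarrow> 'a set" where
  "ideal2 b c = {b * x + c * y | x y. True}"

definition ideal3 :: "'a::comm_ring_1 \<Rightarrow> 'a \<Rightarrow> 'a \<Rightarrow> 'a set" where
  "ideal3 b c d = {b * x + c * y + d * z | x y z. True}"

text \<open>b,s,t is an A-regular sequence (standard definition):
  b is a nonzerodivisor on A, s on A/bA, t on A/(bA+sA), and A/(bA+sA+tA) \<noteq> 0.\<close>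
definition regular_seq3 :: "'a::comm_ring_1 \<Rightarrow> 'a \<Rightarrow> 'a \<Rightarrow> bool" where
  "regular_seq3 b s t \<longleftrightarrow>
     (\<forall>x. b * x = 0 \<longrightarrow> x = 0) \<and>
     (\<forall>x. s * x \<in> {b * y | y. True} \<longrightarrow> x \<in> {b * y | y. True}) \<and>
     (\<forall>x. t * x \<in> ideal2 b s \<longrightarrow> x \<in> ideal2 b s) \<and>
     ideal3 b s t \<noteq> UNIV"

end

theory Submission
  imports Defs
begin

text \<open>The power G n = (bA + sA)^n, here ideal2_pow b s n, satisfies G 0 = A and
  G (n+1) = b G n + s^(n+1) A. This is the recursion defining W n with the colon ideal
  (W n : t) replaced by W n itself, so W n = G n as soon as (G n : t) = G n for all n.
  If bA + sA + tA = A, write 1 = a + t z with a \<in> G 1; then x = a x + z (t x) shows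
  (G (n+1) : t) \<subseteq> G (n+1) by induction. For a regular sequence, regularity of b and s
  lets one read off from b y + s^(m+1) z \<in> G (m+2) that y \<in> G (m+1) and z \<in> G 1, so
  regularity of t modulo G 1 propagates to all G n. In part (a), t lies in every
  bA + s^i A, so every colon ideal is A and W i = bA + s^i A.\<close>

fun ideal2_pow :: "'a::comm_ring_1 \<Rightarrow> 'a \<Rightarrow> nat \<Rightarrow> 'a set" where
  "ideal2_pow b s 0 = UNIV"
| "ideal2_pow b s (Suc n) = {b * y + s ^ Suc n * z | y z. y \<in> ideal2_pow b s n}"

lemma ideal2_powI:
  "y \<in> ideal2_pow b s n \<Longrightarrow> x = b * y + s ^ Suc n * z \<Longrightarrow> x \<in> ideal2_pow b s (Suc n)"
  by auto

lemma ideal2_powE: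
  assumes "x \<in> ideal2_pow b s (Suc n)"
  obtains y z where "x = b * y + s ^ Suc n * z" and "y \<in> ideal2_pow b s n"
  using assms by auto

declare ideal2_pow.simps(2) [simp del]

lemma zero_mem_ideal2_pow: "0 \<in> ideal2_pow b s n"
  by (induction n) (auto intro: ideal2_powI[where z = 0])

lemma add_mem_ideal2_pow:
  "x \<in> ideal2_pow b s n \<Longrightarrow> y \<in> ideal2_pow b s n \<Longrightarrow> x + y \<in> ideal2_pow b s n"
proof (induction n arbitrary: x y)
  case (Suc n)
  obtain y1 z1 where x: "x = b * y1 + s ^ Suc n * z1" "y1 \<in> ideal2_pow b s n"
    using Suc.prems(1) by (rule ideal2_powE)
  obtain y2 z2 where y: "y = b * y2 + s ^ Suc n * z2" "y2 \<in> ideal2_pow b s n"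
    using Suc.prems(2) by (rule ideal2_powE)
  have "x + y = b * (y1 + y2) + s ^ Suc n * (z1 + z2)"
    using x y by (simp add: algebra_simps)
  then show ?case using Suc.IH x y by (blast intro: ideal2_powI)
qed simp

lemma mult_mem_ideal2_pow: "x \<in> ideal2_pow b s n \<Longrightarrow> r * x \<in> ideal2_pow b s n"
proof (induction n arbitrary: x)
  case (Suc n)
  obtain y z where x: "x = b * y + s ^ Suc n * z" "y \<in> ideal2_pow b s n"
    using Suc.prems by (rule ideal2_powE)
  have "r * x = b * (r * y) + s ^ Suc n * (r * z)"
    using x by (simp add: algebra_simps)
  then show ?case using Suc.IH x by (blast intro: ideal2_powI)
qed simp

lemma ideal2_pow_Suc_subset: "ideal2_pow b s (Suc n) \<subseteq> ideal2_pow b s n"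
proof (induction n)
  case (Suc n)
  show ?case
  proof
    fix x
    assume "x \<in> ideal2_pow b s (Suc (Suc n))"
    then obtain y z where x: "x = b * y + s ^ Suc (Suc n) * z" "y \<in> ideal2_pow b s (Suc n)"
      by (rule ideal2_powE)
    then have "x = b * y + s ^ Suc n * (s * z)" by (simp add: algebra_simps)
    then show "x \<in> ideal2_pow b s (Suc n)" using Suc.IH x by (blast intro: ideal2_powI)
  qed
qed simp

lemma ideal2_pow_one: "ideal2_pow b s (Suc 0) = ideal2 b s"
  by (auto simp: ideal2_def ideal2_pow.simps)

lemma b_mult_mem_ideal2_pow:
  "x \<in> ideal2_pow b s n \<Longrightarrow> b * x \<in> ideal2_pow b s (Suc n)"
  by (rule ideal2_powI[where z = 0]) simp_all

lemma s_mult_mem_ideal2_pow: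
  "x \<in> ideal2_pow b s n \<Longrightarrow> s * x \<in> ideal2_pow b s (Suc n)"
proof (induction n arbitrary: x)
  case 0
  show ?case by (rule ideal2_powI[where y = 0 and z = x]) simp_all
next
  case (Suc n)
  obtain y z where x: "x = b * y + s ^ Suc n * z" "y \<in> ideal2_pow b s n"
    using Suc.prems by (rule ideal2_powE)
  have "s * x = b * (s * y) + s ^ Suc (Suc n) * z"
    using x by (simp add: algebra_simps)
  then show ?case using Suc.IH x by (blast intro: ideal2_powI)
qed

lemma s_power_mult_mem_ideal2_pow:
  "x \<in> ideal2_pow b s n \<Longrightarrow> s ^ k * x \<in> ideal2_pow b s (n + k)"
  by (induction k) (simp_all add: mult.assoc s_mult_mem_ideal2_pow)

lemma s_power_mem_ideal2_pow: "s ^ n * x \<in> ideal2_pow b s n"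
  using s_power_mult_mem_ideal2_pow[of x b s 0 n] by simp

lemma ideal2_mult_mem_ideal2_pow:
  assumes a: "a \<in> ideal2 b s" and x: "x \<in> ideal2_pow b s n"
  shows "a * x \<in> ideal2_pow b s (Suc n)"
proof -
  obtain u v where "a = b * u + s * v" using a unfolding ideal2_def by blast
  then have "a * x = b * (u * x) + s * (v * x)" by (simp add: algebra_simps)
  then show ?thesis
    using x by (simp add: add_mem_ideal2_pow b_mult_mem_ideal2_pow s_mult_mem_ideal2_pow
        mult_mem_ideal2_pow)
qed

lemma ideal_gen_subset:
  assumes "0 \<in> T" and "\<And>x y. x \<in> T \<Longrightarrow> y \<in> T \<Longrightarrow> x + y \<in> T"
    and "\<And>x r. x \<in> S \<Longrightarrow> r * x \<in> T"
  shows "ideal_gen S \<subseteq> T"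
proof
  fix x
  assume "x \<in> ideal_gen S"
  then show "x \<in> T" by induction (use assms in auto)
qed

lemma mem_ideal_gen: "x \<in> S \<Longrightarrow> x \<in> ideal_gen S"
  using ideal_gen.mult[of x S 1] by simp

lemma ideal_prod_ideal2_pow:
  "ideal_prod (ideal2_pow b s n) (ideal2 b s) = ideal2_pow b s (Suc n)"
proof
  show "ideal_prod (ideal2_pow b s n) (ideal2 b s) \<subseteq> ideal2_pow b s (Suc n)"
    unfolding ideal_prod_def
  proof (rule ideal_gen_subset)
    fix p r
    assume "p \<in> {x * y | x y. x \<in> ideal2_pow b s n \<and> y \<in> ideal2 b s}"
    then obtain x a where "p = x * a" "x \<in> ideal2_pow b s n" "a \<in> ideal2 b s" by blast
    then show "r * p \<in> ideal2_pow b s (Suc n)"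
      by (simp add: mult.commute[of x] ideal2_mult_mem_ideal2_pow mult_mem_ideal2_pow)
  qed (simp_all add: zero_mem_ideal2_pow add_mem_ideal2_pow)
next
  let ?P = "ideal_prod (ideal2_pow b s n) (ideal2 b s)"
  show "ideal2_pow b s (Suc n) \<subseteq> ?P"
  proof
    fix x
    assume "x \<in> ideal2_pow b s (Suc n)"
    then obtain y z where x: "x = b * y + s ^ Suc n * z" "y \<in> ideal2_pow b s n"
      by (rule ideal2_powE)
    have "b \<in> ideal2 b s" "s \<in> ideal2 b s"
      unfolding ideal2_def by (force intro: exI[of _ 1] exI[of _ 0])+
    then have "y * b \<in> ?P" "(s ^ n * z) * s \<in> ?P"
      using x(2) s_power_mem_ideal2_pow unfolding ideal_prod_def by (blast intro: mem_ideal_gen)+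
    moreover have "x = y * b + (s ^ n * z) * s"
      using x by (simp add: algebra_simps)
    ultimately show "x \<in> ?P" unfolding ideal_prod_def by (simp add: ideal_gen.add)
  qed
qed

lemma ideal_pow_ideal2: "ideal_pow (ideal2 b s) n = ideal2_pow b s n"
  by (induction n) (simp_all add: ideal_prod_ideal2_pow)

lemma Wseq_eq_ideal2_pow:
  assumes "\<And>n x. t * x \<in> ideal2_pow b s n \<Longrightarrow> x \<in> ideal2_pow b s n"
  shows "Wseq b s t n = ideal2_pow b s n"
proof (induction n)
  case (Suc n)
  have "colon (Wseq b s t n) t = ideal2_pow b s n"
    using Suc.IH assms mult_mem_ideal2_pow by (auto simp: colon_def)
  then show ?case by (simp add: ideal2_pow.simps)
qed simp

lemma ideal2_one_right: "ideal2 b 1 = UNIV"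
proof -
  have "x = b * 0 + 1 * x" for x by simp
  then show ?thesis unfolding ideal2_def by blast
qed

lemma mult_mem_ideal2: "y \<in> ideal2 b c \<Longrightarrow> r * y \<in> ideal2 b c"
proof -
  assume "y \<in> ideal2 b c"
  then obtain u v where "y = b * u + c * v" unfolding ideal2_def by blast
  then have "r * y = b * (r * u) + c * (r * v)" by (simp add: algebra_simps)
  then show ?thesis unfolding ideal2_def by blast
qed

lemma Wseq_eq_ideal2_power:
  assumes "\<forall>i. t \<in> ideal2 b (s ^ i)"
  shows "Wseq b s t n = ideal2 b (s ^ n)"
proof (induction n)
  case (Suc n)
  have "colon (Wseq b s t n) t = UNIV"
    using Suc.IH assms by (auto simp: colon_def mult.commute[of t] intro: mult_mem_ideal2)
  then show ?case by (auto simp: ideal2_def)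
qed (simp add: ideal2_one_right)

lemma ideal2_pow_cancel_comaximal:
  assumes "ideal3 b s t = UNIV"
  shows "t * x \<in> ideal2_pow b s n \<Longrightarrow> x \<in> ideal2_pow b s n"
proof (induction n arbitrary: x)
  case (Suc n)
  have "1 \<in> ideal3 b s t" using assms by simp
  then obtain u v z where one: "1 = b * u + s * v + t * z"
    unfolding ideal3_def by blast
  have x: "x = (b * u + s * v) * x + z * (t * x)"
    using arg_cong[OF one, of "\<lambda>c. c * x"] by (simp add: algebra_simps)
  have "b * u + s * v \<in> ideal2 b s" unfolding ideal2_def by blast
  moreover have "x \<in> ideal2_pow b s n"
    using Suc ideal2_pow_Suc_subset by blast
  ultimately show ?case
    by (subst x) (simp add: add_mem_ideal2_pow ideal2_mult_mem_ideal2_pow mult_mem_ideal2_pow Suc.prems)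
qed simp

lemma cancel_power_of_cancel:
  fixes s :: "'a::comm_monoid_mult"
  assumes "\<And>x. s * x \<in> I \<Longrightarrow> x \<in> I"
  shows "s ^ k * x \<in> I \<Longrightarrow> x \<in> I"
proof (induction k arbitrary: x)
  case (Suc k)
  then have "s ^ k * (s * x) \<in> I" by (simp add: mult_ac)
  then show ?case using Suc.IH assms by blast
qed simp

text \<open>Compare with a representation b y' + s^(m+2) z', y' \<in> G (m+1): regularity of
  s^(m+1) modulo bA gives s z' - z = b w, and cancelling b gives y = y' + s^(m+1) w.\<close>
lemma ideal2_pow_Suc_Suc_components:
  assumes b_reg: "\<And>x. b * x = 0 \<Longrightarrow> x = 0"
    and s_reg: "\<And>x. s * x \<in> {b * y | y. True} \<Longrightarrow> x \<in> {b * y | y. True}"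
    and mem: "b * y + s ^ Suc m * z \<in> ideal2_pow b s (Suc (Suc m))"
  shows "z \<in> ideal2 b s" and "y \<in> ideal2_pow b s (Suc m)"
proof -
  obtain y' z' where eq: "b * y + s ^ Suc m * z = b * y' + s ^ Suc (Suc m) * z'"
    and y': "y' \<in> ideal2_pow b s (Suc m)"
    using mem by (rule ideal2_powE)
  have diff: "s ^ Suc m * (s * z' - z) = b * (y - y')"
    using eq by (simp add: algebra_simps)
  then obtain w where w: "s * z' - z = b * w"
    using cancel_power_of_cancel[OF s_reg, where k = "Suc m"] by blast
  then have "z = b * (- w) + s * z'" by (simp add: algebra_simps)
  then show "z \<in> ideal2 b s" unfolding ideal2_def by blast
  have "b * (y - y' - s ^ Suc m * w) = 0"
    using diff w by (simp add: algebra_simps)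
  then have "y - y' - s ^ Suc m * w = 0" by (rule b_reg)
  then have "y = y' + s ^ Suc m * w" by (simp add: algebra_simps)
  then show "y \<in> ideal2_pow b s (Suc m)"
    using add_mem_ideal2_pow[OF y' s_power_mem_ideal2_pow] by simp
qed

lemma ideal2_pow_cancel_regular:
  assumes b_reg: "\<And>x. b * x = 0 \<Longrightarrow> x = 0"
    and s_reg: "\<And>x. s * x \<in> {b * y | y. True} \<Longrightarrow> x \<in> {b * y | y. True}"
    and t_reg: "\<And>x. t * x \<in> ideal2 b s \<Longrightarrow> x \<in> ideal2 b s"
  shows "t * x \<in> ideal2_pow b s n \<Longrightarrow> x \<in> ideal2_pow b s n"
proof (induction n arbitrary: x)
  case (Suc n)
  show ?case
  proof (cases n)
    case 0
    then show ?thesis using Suc.prems t_reg by (simp add: ideal2_pow_one)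
  next
    case (Suc m)
    have "x \<in> ideal2_pow b s (Suc m)"
      using Suc.IH Suc.prems ideal2_pow_Suc_subset \<open>n = Suc m\<close> by blast
    then obtain y z where x: "x = b * y + s ^ Suc m * z" "y \<in> ideal2_pow b s m"
      by (rule ideal2_powE)
    have "b * (t * y) + s ^ Suc m * (t * z) \<in> ideal2_pow b s (Suc (Suc m))"
      using Suc.prems x(1) \<open>n = Suc m\<close> by (simp add: algebra_simps)
    then have "t * z \<in> ideal2 b s" "t * y \<in> ideal2_pow b s (Suc m)"
      using ideal2_pow_Suc_Suc_components[OF b_reg s_reg] by blast+
    then have "z \<in> ideal2_pow b s (Suc 0)" "y \<in> ideal2_pow b s (Suc m)"
      using t_reg Suc.IH \<open>n = Suc m\<close> by (simp_all add: ideal2_pow_one)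
    then have "b * y \<in> ideal2_pow b s (Suc n)" "s ^ Suc m * z \<in> ideal2_pow b s (Suc n)"
      using b_mult_mem_ideal2_pow s_power_mult_mem_ideal2_pow[of z b s "Suc 0" "Suc m"] \<open>n = Suc m\<close>
      by simp_all
    then show ?thesis unfolding x(1) by (rule add_mem_ideal2_pow)
  qed
qed simp

theorem lemma3p4:
  fixes b s t :: "'a::comm_ring_1"
  shows "(t \<in> (\<Inter>i. ideal2 b (s ^ i)) \<longrightarrow> Wbst b s t = (\<Inter>i. ideal2 b (s ^ i)))
       \<and> ((ideal3 b s t = UNIV \<or> regular_seq3 b s t)
            \<longrightarrow> Wbst b s t = (\<Inter>i. ideal_pow (ideal2 b s) i))"
proof (intro conjI impI)
  assume "t \<in> (\<Inter>i. ideal2 b (s ^ i))"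
  then show "Wbst b s t = (\<Inter>i. ideal2 b (s ^ i))"
    unfolding Wbst_def by (simp add: Wseq_eq_ideal2_power)
next
  assume "ideal3 b s t = UNIV \<or> regular_seq3 b s t"
  then have "t * x \<in> ideal2_pow b s n \<Longrightarrow> x \<in> ideal2_pow b s n" for n x
    unfolding regular_seq3_def
    using ideal2_pow_cancel_comaximal ideal2_pow_cancel_regular by blast
  then show "Wbst b s t = (\<Inter>i. ideal_pow (ideal2 b s) i)"
    unfolding Wbst_def by (simp add: Wseq_eq_ideal2_pow ideal_pow_ideal2)
qed

end
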